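(* Let $\mathbf{M}^*\in\mathbb{R}^{d_1\times d_2}$ have rank $r$, let $f(\mathbf{U},\mathbf{V})=\frac12\|\mathbf{U}\mathbf{V}^\top-\mathbf{M}^*\|_F^2$ for $\mathbf{U}\in\mathbb{R}^{d_1\times r}$, $\mathbf{V}\in\mathbb{R}^{d_2\times r}$, and let $\epsilon>0$. Suppose $(\mathbf{U},\mathbf{V})$ is a stationary point of $f$ such that $\|\mathbf{U}^\top\mathbf{U}-\mathbf{V}^\top\mathbf{V}\|_F\le\epsilon$. Then either $\|\mathbf{U}\mathbf{V}^\top-\mathbf{M}^*\|_F\le\epsilon$, or $(\mathbf{U},\mathbf{V})$ is a strict saddle point of $f$.
   Context: A stationary point is a point where the gradient of $f$ vanishes. A saddle point of $f$ is strict if the Hessian of $f$ at that point has a negative eigenvalue. $\|\cdot\|_F$ is the Frobenius norm. *)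

theory Defs
  imports "HOL-Analysis.Analysis"
begin

definition frob_norm :: "real^'n^'m \<Rightarrow> real" where
  "frob_norm A = sqrt (\<Sum>i\<in>UNIV. \<Sum>j\<in>UNIV. (A $ i $ j)\<^sup>2)"

definition mf_obj :: "real^'d2^'d1 \<Rightarrow> ((real^'r^'d1) \<times> (real^'r^'d2)) \<Rightarrow> real" where
  "mf_obj M = (\<lambda>(U, V). (1/2) * (frob_norm (U ** transpose V - M))\<^sup>2)"

definition stationary_point :: "('a::euclidean_space \<Rightarrow> real) \<Rightarrow> 'a \<Rightarrow> bool" where
  "stationary_point f x \<longleftrightarrow> (f has_derivative (\<lambda>h. 0)) (at x)"

definition is_hessian :: "('a::euclidean_space \<Rightarrow> real) \<Rightarrow> 'a \<Rightarrow> ('a \<Rightarrow> 'a) \<Rightarrow> bool" where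
  "is_hessian f x H \<longleftrightarrow> (\<exists>g. (\<forall>y. (f has_derivative (\<lambda>h. g y \<bullet> h)) (at y))
                              \<and> (g has_derivative H) (at x))"

definition strict_saddle :: "('a::euclidean_space \<Rightarrow> real) \<Rightarrow> 'a \<Rightarrow> bool" where
  "strict_saddle f x \<longleftrightarrow> stationary_point f x \<and>
     (\<exists>H. is_hessian f x H \<and> (\<exists>c v. c < 0 \<and> v \<noteq> 0 \<and> H v = c *\<^sub>R v))"

end

theory Submission
  imports Defs
begin

text \<open>Let \<open>E = U V\<^sup>T - M\<close>; at a stationary point \<open>E V = 0\<close> and \<open>E\<^sup>T U = 0\<close>.
  If \<open>U\<close> and \<open>V\<close> both have rank \<open>r\<close>, then \<open>V\<^sup>T V\<close> is invertible and \<open>M V = U (V\<^sup>T V)\<close>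
  gives \<open>range U \<subseteq> range M\<close>, hence equality since both have dimension \<open>r\<close>. The columns of
  \<open>E\<close> then lie in \<open>range U\<close> and are orthogonal to it, so \<open>E = 0\<close>.
  Otherwise \<open>U q = 0\<close> or \<open>V q = 0\<close> for some \<open>q \<noteq> 0\<close>. For \<open>a = E b \<noteq> 0\<close> the Hessian form in
  the direction \<open>(s a q\<^sup>T, t b q\<^sup>T)\<close> is \<open>\<parallel>s a (V q)\<^sup>T + t (U q) b\<^sup>T\<parallel>\<^sup>2 + 2 s t \<parallel>q\<parallel>\<^sup>2 \<parallel>a\<parallel>\<^sup>2\<close>;
  one of the two outer products vanishes, so with one coefficient fixed at \<open>1\<close> the form
  becomes negative once the other is sufficiently negative. As the Hessian is self-adjoint, a minimiser of
  its Rayleigh quotient is then an eigenvector with negative eigenvalue.\<close>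

section \<open>Matrices with the Frobenius inner product\<close>

lemma inner_matrix_eq_sum: "(X::real^'n^'m) \<bullet> Y = (\<Sum>i\<in>UNIV. \<Sum>j\<in>UNIV. X$i$j * Y$i$j)"
  by (simp add: inner_vec_def)

lemma frob_norm_eq_norm: "frob_norm X = norm X"
  by (simp add: frob_norm_def norm_eq_sqrt_inner inner_matrix_eq_sum power2_eq_square)

lemma inner_matrix_mult_transpose_right:
  fixes X :: "real^'n^'m" and A :: "real^'k^'m" and Y :: "real^'k^'n"
  shows "X \<bullet> (A ** transpose Y) = (X ** Y) \<bullet> A"
  unfolding inner_matrix_eq_sum matrix_matrix_mult_def transpose_def
  by (simp add: sum_distrib_left sum_distrib_right mult_ac sum.swap[of _ "UNIV::'k set"])

lemma transpose_zero [simp]: "transpose 0 = 0"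
  by (simp add: transpose_def vec_eq_iff)

lemma inner_transpose_transpose: "transpose (X::real^'n^'m) \<bullet> transpose Y = X \<bullet> Y"
  unfolding inner_matrix_eq_sum transpose_def by (simp add: sum.swap[of _ "UNIV::'n set"])

lemma inner_matrix_mult_transpose_left:
  fixes X :: "real^'n^'m" and A :: "real^'k^'m" and Y :: "real^'k^'n"
  shows "X \<bullet> (A ** transpose Y) = (transpose X ** A) \<bullet> Y"
proof -
  have "X \<bullet> (A ** transpose Y) = transpose X \<bullet> (Y ** transpose A)"
    by (metis inner_transpose_transpose matrix_transpose_mul transpose_transpose)
  also have "\<dots> = (transpose X ** A) \<bullet> Y"
    by (rule inner_matrix_mult_transpose_right)
  finally show ?thesis .
qed

lemma inner_matrix_vector_mult_left: "((A::real^'n^'m) *v x) \<bullet> y = x \<bullet> (transpose A *v y)"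
  by (metis dot_lmul_matrix vector_transpose_matrix)

lemma inj_gram_matrix:
  fixes V :: "real^'r^'d"
  assumes "inj ((*v) V)"
  shows "inj ((*v) (transpose V ** V))"
proof -
  have "y = 0" if "(transpose V ** V) *v y = 0" for y
  proof -
    have "(V *v y) \<bullet> (V *v y) = y \<bullet> ((transpose V ** V) *v y)"
      by (simp add: inner_matrix_vector_mult_left matrix_vector_mul_assoc)
    then have "V *v y = 0"
      using that by simp
    then show ?thesis
      using assms by (metis injD matrix_vector_mult_0_right)
  qed
  then show ?thesis
    by (simp add: linear_injective_0)
qed

lemma range_matrix_mult_surj:
  assumes "surj ((*v) B)"
  shows "range ((*v) (A ** B)) = range ((*v) A)"
proof -
  have "range ((*v) (A ** B)) = (*v) A ` range ((*v) B)"
    by (auto simp flip: matrix_vector_mul_assoc)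
  then show ?thesis
    using assms by simp
qed

lemma matrix_eq_0_if_range_orthogonal:
  fixes E :: "real^'n^'m" and U :: "real^'k^'m"
  assumes "range ((*v) E) \<subseteq> range ((*v) U)" and "transpose U ** E = 0"
  shows "E = 0"
proof -
  have "E *v b = 0" for b
  proof -
    obtain a where a: "E *v b = U *v a"
      using assms(1) by blast
    have "(U *v a) \<bullet> (E *v b) = a \<bullet> ((transpose U ** E) *v b)"
      by (simp add: inner_matrix_vector_mult_left matrix_vector_mul_assoc)
    then have "(E *v b) \<bullet> (E *v b) = 0"
      using assms(2) by (simp add: a)
    then show ?thesis
      by simp
  qed
  then show ?thesis
    by (simp add: matrix_eq)
qed

lemma bounded_bilinear_matrix_mult:
  "bounded_bilinear ((**) :: real^'k^'m \<Rightarrow> real^'n^'k \<Rightarrow> real^'n^'m)"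
proof -
  have "bilinear ((**) :: real^'k^'m \<Rightarrow> real^'n^'k \<Rightarrow> real^'n^'m)"
    by (auto simp: bilinear_def linear_iff vec_eq_iff matrix_matrix_mult_def sum.distrib
        algebra_simps sum_distrib_left)
  then show ?thesis
    by (simp add: bilinear_conv_bounded_bilinear)
qed

lemmas scaleR_matrix_mult =
  bounded_bilinear.scaleR_left[OF bounded_bilinear_matrix_mult]
  bounded_bilinear.scaleR_right[OF bounded_bilinear_matrix_mult]

lemma bounded_linear_transpose: "bounded_linear (transpose :: real^'n^'m \<Rightarrow> real^'m^'n)"
  unfolding linear_conv_bounded_linear[symmetric]
  by (auto simp: linear_iff vec_eq_iff transpose_def)

definition vec_outer :: "real^'m \<Rightarrow> real^'n \<Rightarrow> real^'n^'m" where
  "vec_outer a b = (\<chi> i j. a$i * b$j)"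

lemma vec_outer_mult_transpose_vec_outer:
  "vec_outer a q ** transpose (vec_outer b q') = (q \<bullet> q') *\<^sub>R vec_outer a b"
  by (simp add: vec_eq_iff matrix_matrix_mult_def vec_outer_def transpose_def inner_vec_def
      sum_distrib_left mult_ac)

lemma matrix_mult_transpose_vec_outer: "U ** transpose (vec_outer b q) = vec_outer (U *v q) b"
  by (simp add: vec_eq_iff matrix_matrix_mult_def vec_outer_def transpose_def
      matrix_vector_mult_def sum_distrib_left sum_distrib_right mult_ac)

lemma vec_outer_mult_transpose: "vec_outer a q ** transpose V = vec_outer a (V *v q)"
  by (simp add: vec_eq_iff matrix_matrix_mult_def vec_outer_def transpose_def
      matrix_vector_mult_def sum_distrib_left mult_ac)

lemma inner_vec_outer: "X \<bullet> vec_outer a b = a \<bullet> (X *v b)"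
  by (simp add: inner_vec_def vec_outer_def matrix_vector_mult_def sum_distrib_left mult_ac)

lemma vec_outer_zero [simp]: "vec_outer 0 b = 0" "vec_outer a 0 = 0"
  by (simp_all add: vec_outer_def vec_eq_iff)

section \<open>Spectral facts for self-adjoint operators\<close>

lemma self_adjoint_nonneg_form_zero:
  fixes K :: "'a::real_inner \<Rightarrow> 'a"
  assumes "linear K" and adj: "\<And>x y. K x \<bullet> y = x \<bullet> K y"
    and nonneg: "\<And>x. 0 \<le> x \<bullet> K x" and "v \<bullet> K v = 0"
  shows "K v = 0"
proof (rule ccontr)
  assume "K v \<noteq> 0"
  define n where "n = K v \<bullet> K v"
  define k where "k = K v \<bullet> K (K v)"
  have "n > 0" "k \<ge> 0"
    using \<open>K v \<noteq> 0\<close> nonneg by (auto simp: n_def k_def)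
  have form: "(v - t *\<^sub>R K v) \<bullet> K (v - t *\<^sub>R K v) = t\<^sup>2 * k - 2 * t * n" for t
  proof -
    have "v \<bullet> K (K v) = n"
      using adj[of v "K v"] by (simp add: n_def)
    then show ?thesis
      using \<open>v \<bullet> K v = 0\<close> adj[of "K v" v]
      by (simp add: linear_diff[OF \<open>linear K\<close>] linear_scale[OF \<open>linear K\<close>] inner_diff_left
          inner_diff_right k_def n_def power2_eq_square algebra_simps)
  qed
  define t where "t = n / (k + 1)"
  have "0 \<le> t\<^sup>2 * k - 2 * t * n"
    using nonneg form by metis
  also have "\<dots> = t * n * (k / (k + 1) - 2)"
    using \<open>k \<ge> 0\<close> by (simp add: t_def power2_eq_square divide_simps) (simp add: algebra_simps)
  also have "\<dots> < 0"
    using \<open>n > 0\<close> \<open>k \<ge> 0\<close>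
    by (intro mult_pos_neg) (auto simp: t_def divide_less_eq add_nonneg_pos)
  finally show False by simp
qed

lemma rayleigh_quotient_minimizer:
  fixes H :: "'a::euclidean_space \<Rightarrow> 'a"
  assumes "linear H"
  obtains v where "norm v = 1" and "\<And>x. (v \<bullet> H v) * (x \<bullet> x) \<le> x \<bullet> H x"
proof -
  define q where "q x = x \<bullet> H x" for x
  have "continuous_on (sphere 0 1) q"
    unfolding q_def using \<open>linear H\<close>
    by (intro continuous_intros linear_continuous_on) (simp add: linear_conv_bounded_linear)
  moreover obtain b :: 'a where "b \<in> Basis"
    using nonempty_Basis by blast
  then have "sphere (0::'a) 1 \<noteq> {}"
    by (metis mem_sphere_0 norm_Basis empty_iff)
  ultimately obtain v where v: "v \<in> sphere 0 1" and min: "\<And>y. y \<in> sphere 0 1 \<Longrightarrow> q v \<le> q y"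
    using continuous_attains_inf[OF compact_sphere] by metis
  have "q v * (x \<bullet> x) \<le> q x" for x
  proof (cases "x = 0")
    case True
    then show ?thesis by (simp add: q_def linear_0[OF \<open>linear H\<close>])
  next
    case False
    have "q v \<le> q (x /\<^sub>R norm x)"
      using min False by simp
    also have "\<dots> = q x / (x \<bullet> x)"
      using False by (simp add: q_def linear_scale[OF \<open>linear H\<close>] dot_square_norm
          power2_eq_square field_simps)
    finally show ?thesis
      using False by (simp add: field_simps)
  qed
  with v show ?thesis
    using that by (simp add: q_def)
qed

lemma self_adjoint_negative_eigenvalue:
  fixes H :: "'a::euclidean_space \<Rightarrow> 'a"
  assumes "linear H" and adj: "\<And>x y. H x \<bullet> y = x \<bullet> H y" and "w \<bullet> H w < 0"
  obtains c v where "c < 0" and "v \<noteq> 0" and "H v = c *\<^sub>R v"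
proof -
  obtain v where "norm v = 1" and min: "\<And>x. (v \<bullet> H v) * (x \<bullet> x) \<le> x \<bullet> H x"
    using rayleigh_quotient_minimizer[OF \<open>linear H\<close>] by blast
  define c where "c = v \<bullet> H v"
  have "c * (w \<bullet> w) < 0"
    using min[of w] \<open>w \<bullet> H w < 0\<close> by (simp add: c_def)
  then have "c < 0"
    using inner_ge_zero[of w] by (auto simp: mult_less_0_iff)
  define K where "K x = H x - c *\<^sub>R x" for x
  have "linear K"
    using \<open>linear H\<close> unfolding linear_iff by (simp add: K_def algebra_simps)
  moreover have "K x \<bullet> y = x \<bullet> K y" for x y
    by (simp add: K_def inner_diff_left inner_diff_right adj)
  moreover have "0 \<le> x \<bullet> K x" for x
    using min[of x] by (simp add: K_def c_def inner_diff_right)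
  moreover have "v \<bullet> K v = 0"
    using \<open>norm v = 1\<close> by (simp add: K_def c_def inner_diff_right dot_square_norm)
  ultimately have "K v = 0"
    by (rule self_adjoint_nonneg_form_zero)
  then show ?thesis
    using \<open>norm v = 1\<close> by (intro that[OF \<open>c < 0\<close>, of v]) (auto simp: K_def)
qed

section \<open>Derivatives of the factorization objective\<close>

definition mf_residual :: "real^'d2^'d1 \<Rightarrow> (real^'r^'d1) \<times> (real^'r^'d2) \<Rightarrow> real^'d2^'d1" where
  "mf_residual M p = fst p ** transpose (snd p) - M"

definition mf_residual_deriv ::
    "(real^'r^'d1) \<times> (real^'r^'d2) \<Rightarrow> (real^'r^'d1) \<times> (real^'r^'d2) \<Rightarrow> real^'d2^'d1" where
  "mf_residual_deriv p h = fst h ** transpose (snd p) + fst p ** transpose (snd h)"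

definition mf_grad ::
    "real^'d2^'d1 \<Rightarrow> (real^'r^'d1) \<times> (real^'r^'d2) \<Rightarrow> (real^'r^'d1) \<times> (real^'r^'d2)" where
  "mf_grad M p = (mf_residual M p ** snd p, transpose (mf_residual M p) ** fst p)"

definition mf_hess :: "real^'d2^'d1 \<Rightarrow> (real^'r^'d1) \<times> (real^'r^'d2) \<Rightarrow>
    (real^'r^'d1) \<times> (real^'r^'d2) \<Rightarrow> (real^'r^'d1) \<times> (real^'r^'d2)" where
  "mf_hess M p h =
    (mf_residual M p ** snd h + mf_residual_deriv p h ** snd p,
     transpose (mf_residual M p) ** fst h + transpose (mf_residual_deriv p h) ** fst p)"

lemma has_derivative_mf_residual:
  "(mf_residual M has_derivative mf_residual_deriv p) (at p within S)"
proof -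
  have "((\<lambda>p. fst p ** transpose (snd p)) has_derivative
      (\<lambda>h. fst p ** transpose (snd h) + fst h ** transpose (snd p))) (at p within S)"
    using bounded_bilinear.FDERIV[OF bounded_bilinear_matrix_mult
        has_derivative_fst[OF has_derivative_ident]
        bounded_linear.has_derivative[OF bounded_linear_transpose
          has_derivative_snd[OF has_derivative_ident]], of p S]
    by simp
  then have "((\<lambda>p. fst p ** transpose (snd p) - M) has_derivative
      (\<lambda>h. fst p ** transpose (snd h) + fst h ** transpose (snd p) - 0)) (at p within S)"
    by (intro has_derivative_diff has_derivative_const)
  then show ?thesis
    unfolding mf_residual_def[abs_def] mf_residual_deriv_def[abs_def] by (simp add: add.commute)
qed

lemma inner_mf_residual_deriv: "mf_residual M p \<bullet> mf_residual_deriv p h = mf_grad M p \<bullet> h"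
  using inner_matrix_mult_transpose_right[of "mf_residual M p" "fst h" "snd p"]
    inner_matrix_mult_transpose_left[of "mf_residual M p" "fst p" "snd h"]
  by (simp add: mf_residual_deriv_def mf_grad_def inner_add_right inner_prod_def)

lemma has_derivative_mf_obj: "(mf_obj M has_derivative (\<lambda>h. mf_grad M p \<bullet> h)) (at p)"
proof -
  have obj: "mf_obj M = (\<lambda>p. (1/2) * (mf_residual M p \<bullet> mf_residual M p))"
    by (auto simp: fun_eq_iff mf_obj_def frob_norm_eq_norm mf_residual_def power2_norm_eq_inner)
  have "((\<lambda>p. (1/2) * (mf_residual M p \<bullet> mf_residual M p)) has_derivative
      (\<lambda>h. (1/2) * (mf_residual M p \<bullet> mf_residual_deriv p h + mf_residual_deriv p h \<bullet> mf_residual M p)))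
      (at p)"
    using has_derivative_inner[OF has_derivative_mf_residual has_derivative_mf_residual]
    by (intro has_derivative_mult_right)
  then show ?thesis
    unfolding obj by (simp add: inner_commute[of "mf_residual_deriv p _"] inner_mf_residual_deriv)
qed

lemma has_derivative_mf_grad: "(mf_grad M has_derivative mf_hess M p) (at p)"
proof -
  have "((\<lambda>p. mf_residual M p ** snd p) has_derivative
      (\<lambda>h. mf_residual M p ** snd h + mf_residual_deriv p h ** snd p)) (at p)"
    using bounded_bilinear.FDERIV[OF bounded_bilinear_matrix_mult has_derivative_mf_residual[of M p UNIV]
        has_derivative_snd[OF has_derivative_ident]] by simp
  moreover have "((\<lambda>p. transpose (mf_residual M p) ** fst p) has_derivative
      (\<lambda>h. transpose (mf_residual M p) ** fst h + transpose (mf_residual_deriv p h) ** fst p)) (at p)"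
    using bounded_bilinear.FDERIV[OF bounded_bilinear_matrix_mult
        bounded_linear.has_derivative[OF bounded_linear_transpose has_derivative_mf_residual[of M p UNIV]]
        has_derivative_fst[OF has_derivative_ident]] by simp
  ultimately show ?thesis
    unfolding mf_grad_def[abs_def] mf_hess_def[abs_def] by (rule has_derivative_Pair)
qed

lemma is_hessian_mf_hess: "is_hessian (mf_obj M) p (mf_hess M p)"
  unfolding is_hessian_def using has_derivative_mf_obj has_derivative_mf_grad by blast

lemma stationary_point_mf_obj_iff: "stationary_point (mf_obj M) p \<longleftrightarrow> mf_grad M p = 0"
proof
  assume "stationary_point (mf_obj M) p"
  then have "(\<lambda>h. mf_grad M p \<bullet> h) = (\<lambda>h. 0)"
    unfolding stationary_point_def by (rule has_derivative_unique[OF has_derivative_mf_obj])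
  then have "mf_grad M p \<bullet> mf_grad M p = 0"
    by (rule fun_cong)
  then show "mf_grad M p = 0"
    by simp
next
  assume "mf_grad M p = 0"
  then show "stationary_point (mf_obj M) p"
    unfolding stationary_point_def using has_derivative_mf_obj[of M p] by simp
qed

lemma inner_mf_hess:
  "mf_hess M p h \<bullet> k = mf_residual_deriv p h \<bullet> mf_residual_deriv p k
    + mf_residual M p \<bullet> (fst k ** transpose (snd h) + fst h ** transpose (snd k))"
  using inner_matrix_mult_transpose_right[of "mf_residual_deriv p h" "fst k" "snd p"]
    inner_matrix_mult_transpose_left[of "mf_residual_deriv p h" "fst p" "snd k"]
    inner_matrix_mult_transpose_right[of "mf_residual M p" "fst k" "snd h"]
    inner_matrix_mult_transpose_left[of "mf_residual M p" "fst h" "snd k"]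
  unfolding mf_hess_def mf_residual_deriv_def[of p k] inner_prod_def inner_add_left
      inner_add_right fst_conv snd_conv
  by linarith

lemma mf_hess_self_adjoint: "mf_hess M p h \<bullet> k = h \<bullet> mf_hess M p k"
proof -
  have "h \<bullet> mf_hess M p k = mf_hess M p k \<bullet> h"
    by (rule inner_commute)
  then show ?thesis
    unfolding inner_mf_hess inner_add_right
    using inner_commute[of "mf_residual_deriv p h" "mf_residual_deriv p k"] by linarith
qed

lemma mf_hess_quadratic_form:
  "h \<bullet> mf_hess M p h = (norm (mf_residual_deriv p h))\<^sup>2
    + 2 * (mf_residual M p \<bullet> (fst h ** transpose (snd h)))"
  unfolding inner_commute[of h] inner_mf_hess inner_add_right power2_norm_eq_inner by simp

section \<open>Stationary points of the factorization objective\<close>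

lemma mf_residual_eq_0_if_full_rank:
  fixes M :: "real^'d2^'d1" and U :: "real^'r^'d1" and V :: "real^'r^'d2"
  assumes "rank M = CARD('r)" and "mf_grad M (U, V) = 0"
    and "inj ((*v) U)" and "inj ((*v) V)"
  shows "mf_residual M (U, V) = 0"
proof -
  define E where "E = mf_residual M (U, V)"
  have "E ** V = 0" and "transpose E ** U = 0"
    using assms(2) by (simp_all add: mf_grad_def E_def zero_prod_def)
  have "surj ((*v) (transpose V ** V))"
    using inj_gram_matrix[OF assms(4)] by (rule linear_inj_imp_surj[OF matrix_vector_mul_linear])
  moreover have "M ** V = U ** (transpose V ** V)"
    using \<open>E ** V = 0\<close>
    by (simp add: E_def mf_residual_def bounded_bilinear.diff_left[OF bounded_bilinear_matrix_mult]
        matrix_mul_assoc)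
  ultimately have "range ((*v) U) = range ((*v) (M ** V))"
    by (simp add: range_matrix_mult_surj)
  also have "\<dots> \<subseteq> range ((*v) M)"
    by (auto simp flip: matrix_vector_mul_assoc)
  finally have "range ((*v) U) = range ((*v) M)"
    using assms(1,3) dim_image_eq[of "(*v) U" UNIV]
    by (intro subspace_dim_equal) (auto simp: rank_dim_range intro: linear_subspace_image)
  then have "range ((*v) E) \<subseteq> range ((*v) U)"
    by (auto simp: E_def mf_residual_def matrix_vector_mult_diff_rdistrib
        simp flip: matrix_vector_mul_assoc intro!: subspace_diff linear_subspace_image)
  moreover have "transpose U ** E = 0"
    using arg_cong[OF \<open>transpose E ** U = 0\<close>, of transpose] by (simp add: matrix_transpose_mul)
  ultimately show ?thesis
    unfolding E_def by (rule matrix_eq_0_if_range_orthogonal)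
qed

lemma mf_hess_form_vec_outer:
  fixes M :: "real^'d2^'d1" and U :: "real^'r^'d1" and V :: "real^'r^'d2"
  shows "(s *\<^sub>R vec_outer a q, t *\<^sub>R vec_outer b q) \<bullet>
      mf_hess M (U, V) (s *\<^sub>R vec_outer a q, t *\<^sub>R vec_outer b q)
    = (norm (s *\<^sub>R vec_outer a (V *v q) + t *\<^sub>R vec_outer (U *v q) b))\<^sup>2
      + 2 * s * t * (q \<bullet> q) * (a \<bullet> (mf_residual M (U, V) *v b))"
proof -
  have "mf_residual_deriv (U, V) (s *\<^sub>R vec_outer a q, t *\<^sub>R vec_outer b q)
      = s *\<^sub>R vec_outer a (V *v q) + t *\<^sub>R vec_outer (U *v q) b"
    by (simp add: mf_residual_deriv_def transpose_scalar scaleR_matrix_mult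
        vec_outer_mult_transpose matrix_mult_transpose_vec_outer)
  moreover have "(s *\<^sub>R vec_outer a q) ** transpose (t *\<^sub>R vec_outer b q)
      = (s * t * (q \<bullet> q)) *\<^sub>R vec_outer a b"
    by (simp add: transpose_scalar scaleR_matrix_mult vec_outer_mult_transpose_vec_outer)
  ultimately show ?thesis
    unfolding mf_hess_quadratic_form by (simp add: inner_vec_outer)
qed

lemma mf_hess_negative_direction:
  fixes M :: "real^'d2^'d1" and U :: "real^'r^'d1" and V :: "real^'r^'d2"
  assumes "mf_residual M (U, V) \<noteq> 0" and "q \<noteq> 0" and "U *v q = 0 \<or> V *v q = 0"
  obtains h where "h \<bullet> mf_hess M (U, V) h < 0"
proof -
  obtain b where "mf_residual M (U, V) *v b \<noteq> 0"
    using assms(1) by (metis matrix_eq matrix_vector_mult_0)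
  define a where "a = mf_residual M (U, V) *v b"
  define c where "c = (q \<bullet> q) * (a \<bullet> a)"
  have "c > 0"
    using assms(2) \<open>mf_residual M (U, V) *v b \<noteq> 0\<close> by (simp add: c_def a_def)
  have form: "(s *\<^sub>R vec_outer a q, t *\<^sub>R vec_outer b q) \<bullet>
      mf_hess M (U, V) (s *\<^sub>R vec_outer a q, t *\<^sub>R vec_outer b q)
      = (norm (s *\<^sub>R vec_outer a (V *v q) + t *\<^sub>R vec_outer (U *v q) b))\<^sup>2 + 2 * s * t * c" for s t
    unfolding mf_hess_form_vec_outer by (simp add: a_def c_def)
  from assms(3) show thesis
  proof
    assume "U *v q = 0"
    define t where "t = - ((norm (vec_outer a (V *v q)))\<^sup>2 + 1) / (2 * c)"
    have "(vec_outer a q, t *\<^sub>R vec_outer b q) \<bullet>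
        mf_hess M (U, V) (vec_outer a q, t *\<^sub>R vec_outer b q) = -1"
      using form[of 1 t] \<open>c > 0\<close> \<open>U *v q = 0\<close> by (simp add: t_def field_simps)
    then show thesis
      by (intro that[of "(vec_outer a q, t *\<^sub>R vec_outer b q)"]) simp
  next
    assume "V *v q = 0"
    define s where "s = - ((norm (vec_outer (U *v q) b))\<^sup>2 + 1) / (2 * c)"
    have "(s *\<^sub>R vec_outer a q, vec_outer b q) \<bullet>
        mf_hess M (U, V) (s *\<^sub>R vec_outer a q, vec_outer b q) = -1"
      using form[of s 1] \<open>c > 0\<close> \<open>V *v q = 0\<close> by (simp add: s_def field_simps)
    then show thesis
      by (intro that[of "(s *\<^sub>R vec_outer a q, vec_outer b q)"]) simp
  qed
qed

theorem lemma3p2: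
  fixes M :: "real^'d2^'d1" and U :: "real^'r^'d1" and V :: "real^'r^'d2" and \<epsilon> :: real
  assumes "rank M = CARD('r)"
    and "\<epsilon> > 0"
    and "stationary_point (mf_obj M) (U, V)"
    and "frob_norm (transpose U ** U - transpose V ** V) \<le> \<epsilon>"
  shows "frob_norm (U ** transpose V - M) \<le> \<epsilon> \<or> strict_saddle (mf_obj M) (U, V)"
proof (cases "frob_norm (U ** transpose V - M) \<le> \<epsilon>")
  case True
  then show ?thesis by simp
next
  case False
  then have residual: "mf_residual M (U, V) \<noteq> 0"
    using assms(2) by (auto simp: mf_residual_def frob_norm_eq_norm)
  have grad: "mf_grad M (U, V) = 0"
    using assms(3) by (simp add: stationary_point_mf_obj_iff)
  have "\<not> (inj ((*v) U) \<and> inj ((*v) V))"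
    using mf_residual_eq_0_if_full_rank[OF assms(1) grad] residual by blast
  then obtain q where "q \<noteq> 0" and "U *v q = 0 \<or> V *v q = 0"
    by (auto simp: linear_injective_0[OF matrix_vector_mul_linear])
  then obtain h where "h \<bullet> mf_hess M (U, V) h < 0"
    using mf_hess_negative_direction[OF residual] by blast
  moreover have "linear (mf_hess M (U, V))"
    using has_derivative_bounded_linear[OF has_derivative_mf_grad] bounded_linear.linear by blast
  ultimately obtain c v where "c < 0" "v \<noteq> 0" "mf_hess M (U, V) v = c *\<^sub>R v"
    using self_adjoint_negative_eigenvalue[OF _ mf_hess_self_adjoint] by blast
  then have "strict_saddle (mf_obj M) (U, V)"
    unfolding strict_saddle_def using assms(3) is_hessian_mf_hess by blast
  then show ?thesis by simp
qed

end
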